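(* Let $G=(V,E)$ be a finite, simple, connected graph on $n=n(G)$ vertices with maximum degree $\Delta\ge 2$. Then $Z(G)\le \frac{(\Delta-2)n+2}{\Delta-1}$, and if equality $Z(G)=\frac{(\Delta-2)n+2}{\Delta-1}$ holds, then $G$ is regular.
   Context: All graphs are finite, simple and undirected. A set $S\subseteq V$ is a zero forcing set of $G$ if the following process colors every vertex: initially the vertices of $S$ are colored and all others uncolored; repeatedly, whenever a colored vertex has at most one uncolored neighbor, that neighbor becomes colored. The zero forcing number $Z(G)$ is the minimum cardinality of a zero forcing set of $G$. *)

theory Defs
  imports Complex_Main
begin

definition simple_graph :: "'a set \<Rightarrow> ('a \<Rightarrow> 'a \<Rightarrow> bool) \<Rightarrow> bool" where
  "simple_graph V E \<longleftrightarrow> finite V \<and> (\<forall>u v. E u v \<longrightarrow> u \<in> V \<and> v \<in> V)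
     \<and> (\<forall>u v. E u v \<longrightarrow> E v u) \<and> (\<forall>u. \<not> E u u)"

definition neighbors :: "'a set \<Rightarrow> ('a \<Rightarrow> 'a \<Rightarrow> bool) \<Rightarrow> 'a \<Rightarrow> 'a set" where
  "neighbors V E u = {v \<in> V. E u v}"

definition degree :: "'a set \<Rightarrow> ('a \<Rightarrow> 'a \<Rightarrow> bool) \<Rightarrow> 'a \<Rightarrow> nat" where
  "degree V E u = card (neighbors V E u)"

definition max_degree :: "'a set \<Rightarrow> ('a \<Rightarrow> 'a \<Rightarrow> bool) \<Rightarrow> nat" where
  "max_degree V E = Max (degree V E ` V)"

definition regular :: "'a set \<Rightarrow> ('a \<Rightarrow> 'a \<Rightarrow> bool) \<Rightarrow> bool" where
  "regular V E \<longleftrightarrow> (\<exists>k. \<forall>v \<in> V. degree V E v = k)"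

definition connected_graph :: "'a set \<Rightarrow> ('a \<Rightarrow> 'a \<Rightarrow> bool) \<Rightarrow> bool" where
  "connected_graph V E \<longleftrightarrow> V \<noteq> {} \<and>
     (\<forall>u \<in> V. \<forall>v \<in> V. (u, v) \<in> ({(x, y). x \<in> V \<and> y \<in> V \<and> E x y})\<^sup>*)"

inductive_set forced_closure :: "'a set \<Rightarrow> ('a \<Rightarrow> 'a \<Rightarrow> bool) \<Rightarrow> 'a set \<Rightarrow> 'a set"
  for V E S where
  init: "x \<in> S \<Longrightarrow> x \<in> forced_closure V E S"
| force: "\<lbrakk> u \<in> forced_closure V E S; v \<in> neighbors V E u;
           \<forall>w \<in> neighbors V E u. w \<noteq> v \<longrightarrow> w \<in> forced_closure V E S \<rbrakk>
         \<Longrightarrow> v \<in> forced_closure V E S"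

definition zero_forcing_set :: "'a set \<Rightarrow> ('a \<Rightarrow> 'a \<Rightarrow> bool) \<Rightarrow> 'a set \<Rightarrow> bool" where
  "zero_forcing_set V E S \<longleftrightarrow> S \<subseteq> V \<and> V \<subseteq> forced_closure V E S"

definition zero_forcing_number :: "'a set \<Rightarrow> ('a \<Rightarrow> 'a \<Rightarrow> bool) \<Rightarrow> nat" where
  "zero_forcing_number V E = Min (card ` {S. zero_forcing_set V E S})"

end

theory Submission
  imports Defs
begin

(* Fix any vertex v of degree d >= 1 and let C = N[v] be its closed neighbourhood.
   Colouring v together with all but one neighbour forces the last neighbour, so C gets coloured
   at a cost of d vertices.  Afterwards the coloured set C is grown greedily: some u in C has
   k >= 1 neighbours outside C, and since u also has a neighbour inside C, k <= D - 1.  Colouring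
   k - 1 of them lets u force the k-th.  Every such step colours k new vertices while putting only
   k - 1 <= (D-2)/(D-1) * k of them into the forcing set.  Summing up gives a zero forcing set S
   with |S| (D-1) <= (D-2) n + d + 2 - D, which is at most (D-2) n + 2 and strictly smaller when
   d < D.  Hence a non-regular graph, which has a vertex of degree d < D, misses the bound. *)

lemma neighbors_subset: "neighbors V E u \<subseteq> V"
  unfolding neighbors_def by auto

lemma finite_neighbors:
  assumes "simple_graph V E"
  shows "finite (neighbors V E u)"
  using assms neighbors_subset[of V E u] finite_subset unfolding simple_graph_def by auto

lemma not_self_neighbor:
  assumes "simple_graph V E"
  shows "u \<notin> neighbors V E u"
  using assms unfolding simple_graph_def neighbors_def by auto

lemma degree_le_max_degree:
  assumes "simple_graph V E" "u \<in> V"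
  shows "degree V E u \<le> max_degree V E"
  using assms unfolding max_degree_def simple_graph_def by auto

lemma max_degree_attained:
  assumes "simple_graph V E" "V \<noteq> {}"
  obtains z where "z \<in> V" "degree V E z = max_degree V E"
proof -
  have "finite V" using assms(1) unfolding simple_graph_def by auto
  then have "max_degree V E \<in> degree V E ` V"
    unfolding max_degree_def using assms(2) by (intro Max_in) auto
  then show ?thesis using that by auto
qed

lemma rtrancl_crosses_boundary:
  assumes "(a, b) \<in> R\<^sup>*" "a \<in> C" "b \<notin> C"
  shows "\<exists>u w. u \<in> C \<and> w \<notin> C \<and> (u, w) \<in> R"
  using assms by (induction rule: rtrancl_induct) auto

lemma connected_neighbor_exists:
  assumes conn: "connected_graph V E" and v: "v \<in> V" and y: "y \<in> V" "y \<noteq> v"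
  shows "neighbors V E v \<noteq> {}"
proof -
  have "(v, y) \<in> {(x, y). x \<in> V \<and> y \<in> V \<and> E x y}\<^sup>*"
    using conn v y unfolding connected_graph_def by auto
  then show ?thesis
  proof (cases rule: converse_rtranclE)
    case base
    then show ?thesis using y(2) by simp
  next
    case (step a)
    then show ?thesis unfolding neighbors_def by auto
  qed
qed

lemma forced_closure_base: "S \<subseteq> forced_closure V E S"
  by (auto intro: forced_closure.init)

lemma zero_forcing_number_le:
  assumes "simple_graph V E" "zero_forcing_set V E S"
  shows "zero_forcing_number V E \<le> card S"
proof -
  have "finite (Pow V)" using assms(1) unfolding simple_graph_def by auto
  then have "finite {S. zero_forcing_set V E S}"
    by (rule finite_subset[rotated]) (auto simp: zero_forcing_set_def)
  then show ?thesis
    unfolding zero_forcing_number_def using assms(2) by (intro Min_le) auto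
qed

lemma force_neighborhood:
  assumes "u \<in> forced_closure V E X" "w \<in> neighbors V E u"
    and "neighbors V E u - {w} \<subseteq> forced_closure V E X"
  shows "neighbors V E u \<subseteq> forced_closure V E X"
proof -
  have "w \<in> forced_closure V E X"
    using forced_closure.force[of u V E X w] assms by auto
  then show ?thesis using assms(3) by auto
qed

text \<open>T completes C: whenever C is coloured and T is in the initial set, everything gets
  coloured.  This is the invariant maintained while growing the coloured region.\<close>

definition completes :: "'a set \<Rightarrow> ('a \<Rightarrow> 'a \<Rightarrow> bool) \<Rightarrow> 'a set \<Rightarrow> 'a set \<Rightarrow> bool" where
  "completes V E C T \<longleftrightarrow>
     (\<forall>X. C \<subseteq> forced_closure V E X \<longrightarrow> T \<subseteq> X \<longrightarrow> V \<subseteq> forced_closure V E X)"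

text \<open>One step of the growth: if u \<in> C has the outside neighbour w, then colouring all other
  outside neighbours of u lets u force w, so the region C \<union> N(u) becomes coloured.\<close>

lemma completes_step:
  assumes u: "u \<in> C" and w: "w \<in> neighbors V E u - C"
    and T: "completes V E (C \<union> (neighbors V E u - C)) T"
  shows "completes V E C (T \<union> (neighbors V E u - C - {w}))"
  unfolding completes_def
proof (intro allI impI)
  fix X assume C: "C \<subseteq> forced_closure V E X" and X: "T \<union> (neighbors V E u - C - {w}) \<subseteq> X"
  have "neighbors V E u \<subseteq> forced_closure V E X"
    using u w C X forced_closure_base[of X V E]
    by (intro force_neighborhood[of u _ _ _ w]) auto
  then have "C \<union> (neighbors V E u - C) \<subseteq> forced_closure V E X" using C by auto
  then show "V \<subseteq> forced_closure V E X" using T X unfolding completes_def by auto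
qed

section \<open>Greedy growth of the coloured region\<close>

text \<open>If C is a proper nonempty part of a connected graph in which every vertex has a
  neighbour inside C, then some u in C has at least one and at most D - 1 neighbours outside C
  (one of its D possible neighbours lies in C).\<close>

lemma boundary_vertex:
  assumes sg: "simple_graph V E" and conn: "connected_graph V E"
    and C: "C \<subseteq> V" "C \<noteq> {}" "C \<noteq> V" and inner: "\<forall>x\<in>C. \<exists>y\<in>C. E x y"
  obtains u w where "u \<in> C" "w \<in> neighbors V E u - C"
    "card (neighbors V E u - C) \<le> max_degree V E - 1"
proof -
  obtain x c where x: "x \<in> V" "x \<notin> C" and c: "c \<in> C" using C by auto
  have "(c, x) \<in> {(x, y). x \<in> V \<and> y \<in> V \<and> E x y}\<^sup>*"
    using conn c x C unfolding connected_graph_def by auto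
  then obtain u w where u: "u \<in> C" and w: "w \<in> neighbors V E u - C"
    using rtrancl_crosses_boundary[OF _ c x(2)] unfolding neighbors_def by blast
  obtain y where "y \<in> C" "E u y" using inner u by auto
  then have "neighbors V E u - C \<subset> neighbors V E u"
    using C unfolding neighbors_def by auto
  then have "card (neighbors V E u - C) < degree V E u"
    unfolding degree_def using finite_neighbors[OF sg] psubset_card_mono by blast
  moreover have "degree V E u \<le> max_degree V E"
    using degree_le_max_degree[OF sg] u C by auto
  ultimately show ?thesis using that u w by simp
qed

text \<open>Counting for one greedy step: if k vertices are added to the coloured region and k - 1
  of them to the forcing set, with k \<le> D, the invariant a \<le> (a - b) D (a uncoloured vertices,
  b of them in the forcing set) is preserved.\<close>

lemma force_step_count:
  fixes a b k D :: nat
  assumes "b \<le> a" "0 < k" "a \<le> (a - b) * D" "k \<le> D"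
  shows "a + k \<le> (a + k - (b + (k - 1))) * D"
proof -
  have remaining: "a + k - (b + (k - 1)) = (a - b) + 1" using assms(1,2) by linarith
  have "((a - b) + 1) * D = (a - b) * D + D" by (simp only: add_mult_distrib mult_1)
  then show ?thesis unfolding remaining using assms(3,4) by linarith
qed

text \<open>Greedy growth: from a coloured region C without vertices isolated in C, the rest of the
  graph can be coloured by adding a set T to the initial set such that each of the
  |V - C| - |T| forces accounts for at most D - 1 newly coloured vertices.\<close>

lemma grow_forcing_set:
  assumes sg: "simple_graph V E" and conn: "connected_graph V E"
    and "C \<subseteq> V" "C \<noteq> {}" "\<forall>x\<in>C. \<exists>y\<in>C. E x y"
  shows "\<exists>T. T \<subseteq> V - C \<and> completes V E C T
      \<and> card (V - C) \<le> (card (V - C) - card T) * (max_degree V E - 1)"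
  using assms(3-5)
proof (induction "card (V - C)" arbitrary: C rule: less_induct)
  case less
  have finV: "finite V" using sg unfolding simple_graph_def by auto
  show ?case
  proof (cases "C = V")
    case True
    then show ?thesis unfolding completes_def by (intro exI[of _ "{}"]) auto
  next
    case False
    then obtain u w where u: "u \<in> C" and w: "w \<in> neighbors V E u - C"
      and small: "card (neighbors V E u - C) \<le> max_degree V E - 1"
      using boundary_vertex[OF sg conn less.prems(1,2) _ less.prems(3)] by blast
    define N where "N = neighbors V E u - C"
    define C' where "C' = C \<union> N"
    have NV: "N \<subseteq> V - C" and finN: "finite N"
      using neighbors_subset[of V E u] finite_neighbors[OF sg, of u] unfolding N_def by auto
    have fewer: "card (V - C') < card (V - C)"
      using w NV finV unfolding N_def C'_def by (intro psubset_card_mono) auto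
    have C'V: "C' \<subseteq> V" "C' \<noteq> {}" using less.prems(1,2) NV unfolding C'_def by auto
    have inner: "\<forall>x\<in>C'. \<exists>y\<in>C'. E x y"
    proof
      fix x assume "x \<in> C'"
      moreover have "E x u" if "x \<in> N"
        using that sg unfolding N_def neighbors_def simple_graph_def by auto
      ultimately show "\<exists>y\<in>C'. E x y" using less.prems(3) u unfolding C'_def by auto
    qed
    obtain T' where T': "T' \<subseteq> V - C'" "completes V E C' T'"
      "card (V - C') \<le> (card (V - C') - card T') * (max_degree V E - 1)"
      using less.hyps[OF fewer C'V inner] by blast
    define T where "T = T' \<union> (N - {w})"
    have finT': "finite T'" using T'(1) finV finite_subset by blast
    have "T' \<inter> (N - {w}) = {}" using T'(1) unfolding C'_def by auto
    then have card_T: "card T = card T' + (card N - 1)"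
      using finT' finN w unfolding T_def N_def by (simp add: card_Un_disjoint)
    have card_VC: "card (V - C) = card (V - C') + card N"
    proof -
      have "V - C = (V - C') \<union> N" "(V - C') \<inter> N = {}" using NV unfolding C'_def by auto
      then show ?thesis using finV finN by (simp add: card_Un_disjoint)
    qed
    have "card T' \<le> card (V - C')" using T'(1) finV by (simp add: card_mono)
    moreover have "card N > 0" using finN w by (auto simp: N_def card_gt_0_iff)
    ultimately have count: "card (V - C) \<le> (card (V - C) - card T) * (max_degree V E - 1)"
      unfolding card_T card_VC using T'(3) small unfolding N_def by (rule force_step_count)
    have "completes V E C T"
      using completes_step[OF u w] T'(2) unfolding T_def N_def C'_def by blast
    moreover have "T \<subseteq> V - C" using T'(1) NV unfolding T_def C'_def by auto
    ultimately show ?thesis using count by blast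
  qed
qed

section \<open>A zero forcing set grown from one vertex\<close>

text \<open>The arithmetic behind the construction: s \<le> t + d vertices are chosen, where d comes
  from the closed neighbourhood of the start vertex and t from the greedy growth over the
  remaining m = n - d - 1 vertices.\<close>

lemma forcing_set_size_bound:
  fixes s t m d n D :: real
  assumes "s \<le> t + d" "m \<le> (m - t) * (D - 1)" "n = m + d + 1" "D \<ge> 1"
  shows "s * (D - 1) \<le> (D - 2) * n + d + 2 - D"
proof -
  have "s * (D - 1) \<le> (t + d) * (D - 1)"
    using assms(1,4) by (intro mult_right_mono) auto
  also have "\<dots> \<le> (D - 2) * n + d + 2 - D"
    using assms(2,3) by (simp add: algebra_simps)
  finally show ?thesis .
qed

text \<open>Starting from a non-isolated vertex v of degree d: colour v and all but one of its
  neighbours, then grow greedily.\<close>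

lemma zero_forcing_set_from_vertex:
  assumes sg: "simple_graph V E" and conn: "connected_graph V E"
    and v: "v \<in> V" and w: "w \<in> neighbors V E v"
  shows "\<exists>S. zero_forcing_set V E S \<and>
    real (card S) * (real (max_degree V E) - 1)
      \<le> (real (max_degree V E) - 2) * real (card V) + real (degree V E v) + 2 - real (max_degree V E)"
proof -
  have finV: "finite V" using sg unfolding simple_graph_def by auto
  define C where "C = insert v (neighbors V E v)"
  have CV: "C \<subseteq> V" "C \<noteq> {}" using v neighbors_subset[of V E v] unfolding C_def by auto
  have "\<forall>x\<in>C. \<exists>y\<in>C. E x y"
    using w sg unfolding C_def neighbors_def simple_graph_def by auto
  then obtain T where T: "T \<subseteq> V - C" "completes V E C T"
    and count: "card (V - C) \<le> (card (V - C) - card T) * (max_degree V E - 1)"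
    using grow_forcing_set[OF sg conn CV] by blast
  define S where "S = T \<union> (C - {w})"
  have finN: "finite (neighbors V E v)" using finite_neighbors[OF sg] .
  have v_notin: "v \<notin> neighbors V E v" using not_self_neighbor[OF sg] .
  have "neighbors V E v \<subseteq> forced_closure V E S"
    using w v_notin forced_closure_base[of S V E] unfolding S_def C_def
    by (intro force_neighborhood[of v _ _ _ w]) auto
  then have "C \<subseteq> forced_closure V E S"
    using w v_notin forced_closure_base[of S V E] unfolding C_def S_def by auto
  then have zfs: "zero_forcing_set V E S"
    using T CV unfolding zero_forcing_set_def completes_def S_def by auto
  have card_C: "card C = degree V E v + 1"
    unfolding C_def degree_def using finN v_notin by simp
  have "card S \<le> card T + card (C - {w})" unfolding S_def by (rule card_Un_le)
  moreover have "card (C - {w}) = degree V E v"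
    using card_C w finN unfolding C_def by simp
  ultimately have card_S: "real (card S) \<le> real (card T) + real (degree V E v)" by simp
  have T_le: "card T \<le> card (V - C)" using T(1) finV by (simp add: card_mono)
  have "degree V E v \<ge> 1"
    using w finN unfolding degree_def by (simp add: Suc_le_eq card_gt_0_iff) blast
  then have D1: "max_degree V E \<ge> 1" using degree_le_max_degree[OF sg v] by simp
  have card_VC: "real (card V) = real (card (V - C)) + real (degree V E v) + 1"
    using card_C CV finV card_Diff_subset[of C V] card_mono[of V C] finite_subset[of C V] by simp
  have "real (card (V - C)) \<le> real ((card (V - C) - card T) * (max_degree V E - 1))"
    using count by (rule of_nat_mono)
  then have "real (card (V - C)) \<le> (real (card (V - C)) - real (card T)) * (real (max_degree V E) - 1)"
    using T_le D1 by (simp add: of_nat_diff)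
  then have "real (card S) * (real (max_degree V E) - 1)
      \<le> (real (max_degree V E) - 2) * real (card V) + real (degree V E v) + 2 - real (max_degree V E)"
    using card_S card_VC D1 by (intro forcing_set_size_bound) auto
  then show ?thesis using zfs by blast
qed

lemma connected_no_isolated_vertex:
  assumes sg: "simple_graph V E" and conn: "connected_graph V E"
    and D1: "max_degree V E \<ge> 1" and v: "v \<in> V"
  shows "neighbors V E v \<noteq> {}"
proof -
  have "V \<noteq> {}" using conn unfolding connected_graph_def by auto
  then obtain z where z: "z \<in> V" "degree V E z = max_degree V E"
    using max_degree_attained[OF sg] by blast
  then have "neighbors V E z \<noteq> {}" using D1 unfolding degree_def by auto
  then obtain y where y: "y \<in> neighbors V E z" by blast
  have "y \<in> V" "y \<noteq> z"
    using y neighbors_subset[of V E z] not_self_neighbor[OF sg, of z] by auto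
  then obtain x where "x \<in> V" "x \<noteq> v" using z(1) by (cases "v = z") auto
  then show ?thesis using connected_neighbor_exists[OF conn v] by blast
qed

lemma zero_forcing_number_vertex_bound:
  assumes sg: "simple_graph V E" and conn: "connected_graph V E"
    and D1: "max_degree V E \<ge> 1" and v: "v \<in> V"
  shows "real (zero_forcing_number V E) * (real (max_degree V E) - 1)
    \<le> (real (max_degree V E) - 2) * real (card V) + real (degree V E v) + 2 - real (max_degree V E)"
proof -
  obtain w where "w \<in> neighbors V E v"
    using connected_no_isolated_vertex[OF sg conn D1 v] by blast
  then obtain S where S: "zero_forcing_set V E S"
    and size: "real (card S) * (real (max_degree V E) - 1)
      \<le> (real (max_degree V E) - 2) * real (card V) + real (degree V E v) + 2 - real (max_degree V E)"
    using zero_forcing_set_from_vertex[OF sg conn v] by blast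
  have "real (zero_forcing_number V E) * (real (max_degree V E) - 1)
      \<le> real (card S) * (real (max_degree V E) - 1)"
    using zero_forcing_number_le[OF sg S] D1 by (intro mult_right_mono) auto
  then show ?thesis using size by linarith
qed

theorem mainTheorem5:
  fixes V :: "'a set" and E :: "'a \<Rightarrow> 'a \<Rightarrow> bool"
  assumes "simple_graph V E"
    and "connected_graph V E"
    and "max_degree V E \<ge> 2"
  shows "real (zero_forcing_number V E)
           \<le> ((real (max_degree V E) - 2) * real (card V) + 2) / (real (max_degree V E) - 1)
       \<and> (real (zero_forcing_number V E)
           = ((real (max_degree V E) - 2) * real (card V) + 2) / (real (max_degree V E) - 1)
         \<longrightarrow> regular V E)"
proof -
  note sg = assms(1) and conn = assms(2)
  define Z where "Z = real (zero_forcing_number V E)"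
  define D where "D = real (max_degree V E)"
  define n where "n = real (card V)"
  have pos: "D - 1 > 0" using assms(3) unfolding D_def by simp
  have vertex_bound: "Z * (D - 1) \<le> (D - 2) * n + real (degree V E v) + 2 - D" if "v \<in> V" for v
    using zero_forcing_number_vertex_bound[OF sg conn _ that] assms(3) unfolding Z_def D_def n_def by simp
  have degree_le: "real (degree V E v) \<le> D" if "v \<in> V" for v
    using degree_le_max_degree[OF sg that] unfolding D_def by simp
  obtain v where v: "v \<in> V" using conn unfolding connected_graph_def by auto
  have "Z * (D - 1) \<le> (D - 2) * n + 2" using vertex_bound[OF v] degree_le[OF v] by linarith
  then have bound: "Z \<le> ((D - 2) * n + 2) / (D - 1)" using pos by (simp add: pos_le_divide_eq)
  have "regular V E" if tight: "Z = ((D - 2) * n + 2) / (D - 1)"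
  proof (rule ccontr)
    assume "\<not> regular V E"
    then obtain u where u: "u \<in> V" "degree V E u \<noteq> max_degree V E"
      unfolding regular_def by blast
    then have "real (degree V E u) \<le> D - 1"
      using degree_le_max_degree[OF sg u(1)] unfolding D_def by simp
    then have "Z * (D - 1) < (D - 2) * n + 2" using vertex_bound[OF u(1)] by linarith
    then have "Z < ((D - 2) * n + 2) / (D - 1)" using pos by (simp add: pos_less_divide_eq)
    then show False using tight by simp
  qed
  then show ?thesis using bound unfolding Z_def D_def n_def by blast
qed

end
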